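(* Let $f\in L^1([0,1],[0,\infty))$ and $\varepsilon>0$. Then there exists an orientation preserving diffeomorphism $\phi$ of $[0,1]$ such that, defining $\tilde f:=(f\circ\phi)\dot\phi$ and $\tilde X:=\{\tilde t\in[0,1]\mid\tilde f(\tilde t)>\int_0^1f(t)dt+2\varepsilon\}$, we have $\int_{\tilde X}\tilde f\leq\varepsilon$. *)

theory Defs
  imports "HOL-Analysis.Analysis"
begin

text \<open>C-infinity on a set S (one-sided derivatives at boundary points):
  a tower of successive derivatives D 0 = g, D (n+1) = derivative of D n, within S.\<close>
definition Cinf_on :: "real set \<Rightarrow> (real \<Rightarrow> real) \<Rightarrow> bool" where
  "Cinf_on S g \<longleftrightarrow>
     (\<exists>D :: nat \<Rightarrow> real \<Rightarrow> real. D 0 = g \<and>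
        (\<forall>n. \<forall>x\<in>S. (D n has_real_derivative D (Suc n) x) (at x within S)))"

definition orient_pres_diffeo01 :: "(real \<Rightarrow> real) \<Rightarrow> bool" where
  "orient_pres_diffeo01 \<phi> \<longleftrightarrow>
     bij_betw \<phi> {0..1} {0..1} \<and>
     Cinf_on {0..1} \<phi> \<and>
     Cinf_on {0..1} (inv_into {0..1} \<phi>) \<and>
     mono_on {0..1} \<phi>"

end

theory Submission
  imports Defs
begin

text \<open>
  Extend \<open>f\<close> by zero and take running averages: they are continuous, converge to \<open>f\<close>
  almost everywhere (Lebesgue differentiation), and have integral at most \<open>\<integral>f\<close>.
  Approximating the averages plus \<open>\<epsilon>\<close> uniformly by polynomials and normalizing gives
  polynomial densities \<open>q\<^sub>n > 0\<close> with \<open>\<integral>q\<^sub>n = 1\<close> that almost everywhere eventually exceed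
  \<open>f / (\<integral>f + 2\<epsilon>)\<close>, so by dominated convergence the part of \<open>f\<close> above \<open>(\<integral>f + 2\<epsilon>) q\<^sub>n\<close>
  has integral at most \<open>\<epsilon>\<close> for some \<open>n\<close>.
  The inverse \<open>\<phi>\<close> of the primitive of \<open>q\<^sub>n\<close> solves \<open>\<phi>' = 1 / q\<^sub>n \<circ> \<phi>\<close>, hence is smooth,
  and the substitution \<open>t = \<phi> s\<close> maps the superlevel set of \<open>(f \<circ> \<phi>) \<phi>'\<close> onto the
  set where \<open>f > (\<integral>f + 2\<epsilon>) q\<^sub>n\<close>.
\<close>

section \<open>Smooth functions\<close>

lemma polynomial_function_deriv:
  fixes q :: "real \<Rightarrow> real"
  assumes "polynomial_function q"
  shows "polynomial_function (deriv q)" and "(q has_real_derivative deriv q x) (at x)"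
proof -
  obtain q' where q': "polynomial_function q'" "\<And>x. (q has_real_derivative q' x) (at x)"
    using has_real_derivative_polynomial_function assms by (auto simp: real_polynomial_function_eq)
  then have "deriv q = q'" by (auto intro: DERIV_imp_deriv)
  with q' show "polynomial_function (deriv q)" "(q has_real_derivative deriv q x) (at x)" by auto
qed

lemma Cinf_on_polynomial_function:
  assumes "polynomial_function (p :: real \<Rightarrow> real)"
  shows "Cinf_on S p"
proof -
  have "polynomial_function ((deriv ^^ n) p)" for n
    by (induction n) (auto simp: assms polynomial_function_deriv)
  then have "((deriv ^^ n) p has_real_derivative (deriv ^^ Suc n) p x) (at x within S)" for n x
    using has_field_derivative_at_within[OF polynomial_function_deriv(2)] by simp
  then show ?thesis
    unfolding Cinf_on_def by (intro exI[of _ "\<lambda>n. (deriv ^^ n) p"]) simp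
qed

lemma Cinf_on_cong:
  assumes "Cinf_on S g" and "\<And>x. x \<in> S \<Longrightarrow> g x = h x"
  shows "Cinf_on S h"
proof -
  obtain D where D: "D 0 = g" "\<And>n x. x \<in> S \<Longrightarrow> (D n has_real_derivative D (Suc n) x) (at x within S)"
    using assms(1) unfolding Cinf_on_def by blast
  define D' where "D' n = (if n = 0 then h else D n)" for n
  have "(D' n has_real_derivative D' (Suc n) x) (at x within S)" if x: "x \<in> S" for n x
  proof (cases n)
    case 0
    have "(h has_real_derivative D (Suc 0) x) (at x within S)"
      by (rule has_field_derivative_transform_within[OF D(2)[OF x, of 0], of 1])
         (use D(1) assms(2) x in auto)
    then show ?thesis using 0 by (simp add: D'_def)
  qed (use D(2)[OF x] in \<open>simp add: D'_def\<close>)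
  moreover have "D' 0 = h" by (simp add: D'_def)
  ultimately show ?thesis unfolding Cinf_on_def by blast
qed

lemma Cinf_on_has_real_derivative:
  assumes "\<And>x. x \<in> S \<Longrightarrow> (g has_real_derivative g' x) (at x within S)" and "Cinf_on S g'"
  shows "Cinf_on S g"
proof -
  obtain D where D: "D 0 = g'" "\<And>n x. x \<in> S \<Longrightarrow> (D n has_real_derivative D (Suc n) x) (at x within S)"
    using assms(2) unfolding Cinf_on_def by blast
  define D' where "D' n = (case n of 0 \<Rightarrow> g | Suc m \<Rightarrow> D m)" for n
  have "(D' n has_real_derivative D' (Suc n) x) (at x within S)" if x: "x \<in> S" for n x
    using assms(1)[OF x] D(1) D(2)[OF x] by (cases n) (simp_all add: D'_def)
  moreover have "D' 0 = g" by (simp add: D'_def)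
  ultimately show ?thesis unfolding Cinf_on_def by blast
qed

text \<open>If \<open>\<phi>' = 1 / q \<circ> \<phi>\<close>, the \<open>n\<close>-th derivative of \<open>\<phi>\<close> is
  \<open>inverse_ode_numerator q n \<circ> \<phi> / (q \<circ> \<phi>) ^ (2 * n)\<close>.\<close>

fun inverse_ode_numerator :: "(real \<Rightarrow> real) \<Rightarrow> nat \<Rightarrow> real \<Rightarrow> real" where
  "inverse_ode_numerator q 0 = (\<lambda>x. x)"
| "inverse_ode_numerator q (Suc n) =
     (\<lambda>x. deriv (inverse_ode_numerator q n) x * q x - 2 * real n * inverse_ode_numerator q n x * deriv q x)"

lemma polynomial_function_inverse_ode_numerator:
  "polynomial_function q \<Longrightarrow> polynomial_function (inverse_ode_numerator q n)"
  using polynomial_function_mult[where 'b=real, unfolded real_scaleR_def]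
  by (induction n) (auto intro!: polynomial_function_diff polynomial_function_deriv(1))

text \<open>The derivative of \<open>Q \<circ> \<phi> / (q \<circ> \<phi>) ^ (2 * n)\<close>, in the shape produced by
  the quotient and power rules.\<close>

lemma inverse_ode_numerator_step:
  fixes a b c d :: real
  assumes "c \<noteq> 0"
  shows "(a * (1 / c) * c ^ (2 * n) - b * (of_nat (2 * n) * (d * (1 / c) * c ^ (2 * n - Suc 0)))) /
           (c ^ (2 * n) * c ^ (2 * n))
         = (a * c - 2 * real n * b * d) / c ^ (2 * Suc n)"
proof -
  define C where "C = c ^ (2 * n)"
  have pred: "of_nat (2 * n) * (x * c ^ (2 * n - Suc 0)) = of_nat (2 * n) * x * C / c" for x
    using assms by (cases n) (simp_all add: C_def)
  have "c ^ (2 * Suc n) = c * c * C" "C \<noteq> 0"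
    using assms by (simp_all add: C_def)
  then show ?thesis
    using assms unfolding pred C_def[symmetric] by (simp add: field_simps)
qed

lemma Cinf_on_inverse_ode_solution:
  assumes q: "polynomial_function q" and nz: "\<And>s. s \<in> S \<Longrightarrow> q (\<phi> s) \<noteq> 0"
    and \<phi>': "\<And>s. s \<in> S \<Longrightarrow> (\<phi> has_real_derivative 1 / q (\<phi> s)) (at s within S)"
  shows "Cinf_on S \<phi>"
proof -
  define D where "D n s = inverse_ode_numerator q n (\<phi> s) / q (\<phi> s) ^ (2 * n)" for n s
  have "(D n has_real_derivative D (Suc n) s) (at s within S)" if s: "s \<in> S" for n s
  proof -
    define Q where "Q = inverse_ode_numerator q n"
    have "polynomial_function Q"
      unfolding Q_def using q by (rule polynomial_function_inverse_ode_numerator)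
    then have dQ: "((\<lambda>s. Q (\<phi> s)) has_real_derivative deriv Q (\<phi> s) * (1 / q (\<phi> s))) (at s within S)"
      by (rule DERIV_chain'[OF \<phi>'[OF s] polynomial_function_deriv(2)])
    have dq: "((\<lambda>s. q (\<phi> s)) has_real_derivative deriv q (\<phi> s) * (1 / q (\<phi> s))) (at s within S)"
      by (rule DERIV_chain'[OF \<phi>'[OF s] polynomial_function_deriv(2)[OF q]])
    show ?thesis
      unfolding D_def Q_def[symmetric]
      by (rule DERIV_cong[OF DERIV_divide[OF dQ DERIV_power[OF dq] power_not_zero[OF nz[OF s]]]])
         (unfold inverse_ode_numerator.simps Q_def[symmetric],
          rule inverse_ode_numerator_step[OF nz[OF s]])
  qed
  moreover have "D 0 = \<phi>" by (auto simp: D_def)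
  ultimately show ?thesis unfolding Cinf_on_def by blast
qed

section \<open>Diffeomorphisms normalizing a polynomial density\<close>

lemma polynomial_function_has_primitive:
  fixes q :: "real \<Rightarrow> real"
  assumes "polynomial_function q"
  obtains P where "\<And>x. (P has_real_derivative q x) (at x)"
proof -
  obtain a n where q: "q = (\<lambda>x. \<Sum>i\<le>n. a i * x ^ i)"
    using assms by (auto simp: real_polynomial_function_eq[symmetric] real_polynomial_function_iff_sum)
  define P where "P x = (\<Sum>i\<le>n. a i * x ^ Suc i / real (Suc i))" for x
  have "(P has_real_derivative
          (\<Sum>i\<le>n. a i * (real (Suc i) * x ^ (Suc i - Suc 0)) / real (Suc i))) (at x)" for x
    unfolding P_def[abs_def] by (intro DERIV_sum DERIV_cmult DERIV_cdivide DERIV_pow)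
  then show ?thesis
    by (intro that[of P]) (simp add: q)
qed

lemma strict_mono_on_if_derivative_pos:
  fixes \<psi> :: "real \<Rightarrow> real"
  assumes "\<And>x. x \<in> {a..b} \<Longrightarrow> (\<psi> has_real_derivative q x) (at x)" and "\<And>x. x \<in> {a..b} \<Longrightarrow> q x > 0"
  shows "strict_mono_on {a..b} \<psi>"
proof (rule strict_mono_onI)
  fix x y assume xy: "x \<in> {a..b}" "y \<in> {a..b}" "x < y"
  show "\<psi> x < \<psi> y"
  proof (rule DERIV_pos_imp_increasing[OF \<open>x < y\<close>])
    fix z assume "x \<le> z" "z \<le> y"
    then have "z \<in> {a..b}" using xy by auto
    then show "\<exists>d. (\<psi> has_real_derivative d) (at z) \<and> d > 0" using assms by blast
  qed
qed

lemma image_Icc_strict_mono_on: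
  fixes \<psi> :: "real \<Rightarrow> real"
  assumes "strict_mono_on {a..b} \<psi>" and "continuous_on {a..b} \<psi>" and "a \<le> b"
  shows "\<psi> ` {a..b} = {\<psi> a..\<psi> b}"
proof
  show "\<psi> ` {a..b} \<subseteq> {\<psi> a..\<psi> b}"
    using mono_onD[OF strict_mono_on_imp_mono_on[OF assms(1)]] assms(3) by auto
  show "{\<psi> a..\<psi> b} \<subseteq> \<psi> ` {a..b}"
  proof
    fix y assume "y \<in> {\<psi> a..\<psi> b}"
    then obtain x where "x \<in> {a..b}" "\<psi> x = y"
      using IVT'[of \<psi> a y b] assms(2,3) by auto
    then show "y \<in> \<psi> ` {a..b}" by blast
  qed
qed

lemma inv_into_has_real_derivative:
  fixes \<psi> q :: "real \<Rightarrow> real"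
  assumes \<psi>': "\<And>x. x \<in> {a..b} \<Longrightarrow> (\<psi> has_real_derivative q x) (at x)"
    and q_pos: "\<And>x. x \<in> {a..b} \<Longrightarrow> 0 < q x" and "a \<le> b" and y: "\<psi> a < y" "y < \<psi> b"
  shows "(inv_into {a..b} \<psi> has_real_derivative 1 / q (inv_into {a..b} \<psi> y)) (at y)"
proof -
  define \<phi> where "\<phi> = inv_into {a..b} \<psi>"
  have mono: "strict_mono_on {a..b} \<psi>"
    using \<psi>' q_pos by (rule strict_mono_on_if_derivative_pos)
  have cont: "isCont \<psi> x" if "x \<in> {a..b}" for x
    using DERIV_isCont[OF \<psi>'[OF that]] .
  have img: "\<psi> ` {a..b} = {\<psi> a..\<psi> b}"
    using image_Icc_strict_mono_on[OF mono _ \<open>a \<le> b\<close>] cont by (simp add: continuous_at_imp_continuous_on)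
  have \<psi>\<phi>: "\<psi> (\<phi> z) = z" and \<phi>_mem: "\<phi> z \<in> {a..b}" if "z \<in> {\<psi> a..\<psi> b}" for z
    using that unfolding \<phi>_def img[symmetric] by (rule f_inv_into_f, rule inv_into_into)
  have \<phi>\<psi>: "\<phi> (\<psi> x) = x" if "x \<in> {a..b}" for x
    unfolding \<phi>_def using inv_into_f_f[OF strict_mono_on_imp_inj_on[OF mono] that] .
  have y_mem: "y \<in> {\<psi> a..\<psi> b}"
    using y by simp
  have "a \<noteq> \<phi> y" "\<phi> y \<noteq> b"
    using \<psi>\<phi>[OF y_mem] y by auto
  with \<phi>_mem[OF y_mem] have "a < \<phi> y" "\<phi> y < b"
    by auto
  then have "isCont \<phi> (\<psi> (\<phi> y))"
    by (rule isCont_inverse_function2) (use \<phi>\<psi> cont in auto)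
  then have "isCont \<phi> y"
    using \<psi>\<phi>[OF y_mem] by simp
  moreover have "q (\<phi> y) \<noteq> 0"
    using q_pos[OF \<phi>_mem[OF y_mem]] by simp
  ultimately have "(\<phi> has_real_derivative inverse (q (\<phi> y))) (at y)"
    using \<psi>\<phi> y
    by (intro DERIV_inverse_function[where f = \<psi> and a = "\<psi> a" and b = "\<psi> b"] \<psi>' \<phi>_mem[OF y_mem]) auto
  then show ?thesis
    by (simp add: \<phi>_def inverse_eq_divide)
qed

lemma inv_into_strict_mono_on_fixed_Icc:
  fixes \<psi> :: "real \<Rightarrow> real"
  assumes mono: "strict_mono_on {a..b} \<psi>" and cont: "continuous_on {a..b} \<psi>"
    and cd: "a \<le> c" "c \<le> d" "d \<le> b" and fixed: "\<psi> c = c" "\<psi> d = d"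
  defines "\<phi> \<equiv> inv_into {a..b} \<psi>"
  shows "bij_betw \<phi> {c..d} {c..d}" and "mono_on {c..d} \<phi>" and "\<And>s. s \<in> {c..d} \<Longrightarrow> \<psi> (\<phi> s) = s"
proof -
  have inj: "inj_on \<psi> {a..b}"
    using mono by (rule strict_mono_on_imp_inj_on)
  have img: "\<psi> ` {c..d} = {c..d}"
    using image_Icc_strict_mono_on[OF monotone_on_subset[OF mono] continuous_on_subset[OF cont]] cd fixed
    by auto
  have \<phi>\<psi>: "\<phi> (\<psi> x) = x" if "x \<in> {a..b}" for x
    unfolding \<phi>_def using inv_into_f_f[OF inj that] .
  have \<phi>_img: "\<phi> ` {c..d} = {c..d}"
    using inv_into_image_cancel[OF inj, of "{c..d}"] img cd by (simp add: \<phi>_def)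
  show \<psi>\<phi>: "\<psi> (\<phi> s) = s" if "s \<in> {c..d}" for s
  proof -
    have "s \<in> \<psi> ` {c..d}" using img that by simp
    then obtain x where "x \<in> {c..d}" "s = \<psi> x" by (rule imageE)
    then show ?thesis using \<phi>\<psi> cd by simp
  qed
  then have "inj_on \<phi> {c..d}"
    by (metis inj_on_inverseI)
  with \<phi>_img show "bij_betw \<phi> {c..d} {c..d}"
    by (simp add: bij_betw_def)
  show "mono_on {c..d} \<phi>"
  proof (rule mono_onI)
    fix r s :: real assume rs: "r \<in> {c..d}" "s \<in> {c..d}" "r \<le> s"
    moreover have "\<phi> r \<in> {a..b}" "\<phi> s \<in> {a..b}"
      using imageI[OF rs(1), of \<phi>] imageI[OF rs(2), of \<phi>] \<phi>_img cd by auto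
    ultimately show "\<phi> r \<le> \<phi> s"
      using strict_mono_on_less_eq[OF mono] \<psi>\<phi> by metis
  qed
qed

text \<open>Positivity of \<open>q\<close> beyond \<open>[0, 1]\<close> lets \<open>\<psi>\<close> be inverted on an open interval
  around \<open>[0, 1]\<close>, so the derivative of \<open>\<phi>\<close> at the end points comes from the two-sided
  inverse function theorem.\<close>

lemma orient_pres_diffeo01_inverse_of_primitive:
  fixes q \<psi> :: "real \<Rightarrow> real"
  assumes q: "polynomial_function q" and q_pos: "\<And>x. x \<in> {-1..2} \<Longrightarrow> q x > 0"
    and \<psi>': "\<And>x. (\<psi> has_real_derivative q x) (at x)" and \<psi>0: "\<psi> 0 = 0" and \<psi>1: "\<psi> 1 = 1"
  obtains \<phi> where "orient_pres_diffeo01 \<phi>"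
    and "\<And>s. s \<in> {0..1} \<Longrightarrow> (\<phi> has_real_derivative 1 / q (\<phi> s)) (at s within {0..1})"
proof -
  define \<phi> where "\<phi> = inv_into {-1..2} \<psi>"
  have mono: "strict_mono_on {-1..2} \<psi>"
    using \<psi>' q_pos by (rule strict_mono_on_if_derivative_pos)
  have "continuous_on {-1..2} \<psi>"
    using DERIV_isCont[OF \<psi>'] by (simp add: continuous_at_imp_continuous_on)
  note \<phi>_props = inv_into_strict_mono_on_fixed_Icc[OF mono this _ _ _ \<psi>0 \<psi>1, folded \<phi>_def, simplified]
  have \<phi>_mem: "\<phi> s \<in> {0..1}" if "s \<in> {0..1}" for s
    using bij_betw_apply[OF \<phi>_props(1) that] .
  have "\<psi> (-1) < 0" "1 < \<psi> 2"
    using strict_mono_onD[OF mono, of "-1" 0] strict_mono_onD[OF mono, of 1 2] \<psi>0 \<psi>1 by auto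
  then have \<phi>': "(\<phi> has_real_derivative 1 / q (\<phi> s)) (at s)" if "s \<in> {0..1}" for s
    unfolding \<phi>_def using \<psi>' q_pos that by (intro inv_into_has_real_derivative) auto
  have "Cinf_on {0..1} \<phi>"
  proof (rule Cinf_on_inverse_ode_solution[OF q])
    show "q (\<phi> s) \<noteq> 0" if "s \<in> {0..1}" for s
      using q_pos[of "\<phi> s"] \<phi>_mem[OF that] by simp
    show "(\<phi> has_real_derivative 1 / q (\<phi> s)) (at s within {0..1})" if "s \<in> {0..1}" for s
      using \<phi>'[OF that] by (rule has_field_derivative_at_within)
  qed
  moreover have "Cinf_on {0..1} (inv_into {0..1} \<phi>)"
  proof (rule Cinf_on_cong)
    show "Cinf_on {0..1} \<psi>"
      using \<psi>' by (intro Cinf_on_has_real_derivative[OF _ Cinf_on_polynomial_function[OF q]])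
        (auto intro: has_field_derivative_at_within)
    show "\<psi> t = inv_into {0..1} \<phi> t" if "t \<in> {0..1}" for t
    proof -
      have "t \<in> \<phi> ` {0..1}"
        using bij_betw_imp_surj_on[OF \<phi>_props(1)] that by simp
      then obtain s where "s \<in> {0..1}" "t = \<phi> s" by (rule imageE)
      then show ?thesis
        using \<phi>_props(3) inv_into_f_f[OF bij_betw_imp_inj_on[OF \<phi>_props(1)]] by simp
    qed
  qed
  ultimately have "orient_pres_diffeo01 \<phi>"
    unfolding orient_pres_diffeo01_def using \<phi>_props(1,2) by blast
  then show ?thesis
    using that \<phi>' has_field_derivative_at_within by blast
qed

lemma orient_pres_diffeo01_normalizing_density:
  fixes q :: "real \<Rightarrow> real"
  assumes q: "polynomial_function q" and q_pos: "\<And>x. x \<in> {-1..2} \<Longrightarrow> 0 < q x"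
    and q_int: "integral {0..1} q = 1"
  obtains \<phi> where "orient_pres_diffeo01 \<phi>"
    and "\<And>s. s \<in> {0..1} \<Longrightarrow> (\<phi> has_real_derivative 1 / q (\<phi> s)) (at s within {0..1})"
proof -
  obtain P where P: "\<And>x. (P has_real_derivative q x) (at x)"
    using polynomial_function_has_primitive[OF q] by blast
  have "(q has_integral P 1 - P 0) {0..1}"
    by (rule fundamental_theorem_of_calculus)
       (auto simp flip: has_real_derivative_iff_has_vector_derivative intro: has_field_derivative_at_within P)
  then have "P 1 - P 0 = 1"
    using q_int integral_unique by metis
  moreover have "((\<lambda>x. P x - P 0) has_real_derivative q x) (at x)" for x
    using DERIV_diff[OF P DERIV_const] by simp
  ultimately show ?thesis
    using orient_pres_diffeo01_inverse_of_primitive[OF q q_pos, of "\<lambda>x. P x - P 0"] that by auto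
qed

section \<open>Running averages\<close>

definition running_average :: "(real \<Rightarrow> real) \<Rightarrow> real \<Rightarrow> real \<Rightarrow> real" where
  "running_average g r t = integral {t..t + r} g / r"

lemma running_average_tendsto_ae:
  fixes g :: "real \<Rightarrow> real"
  assumes "\<And>a b. g integrable_on {a..b}"
  obtains N where "negligible N"
    and "\<And>x r. x \<notin> N \<Longrightarrow> r \<longlonglongrightarrow> 0 \<Longrightarrow> (\<And>n. 0 < r n) \<Longrightarrow>
           (\<lambda>n. running_average g (r n) x) \<longlonglongrightarrow> g x"
proof -
  obtain N where N: "negligible N"
    "\<And>x e. \<lbrakk>x \<notin> N; 0 < e\<rbrakk> \<Longrightarrow> \<exists>d>0. \<forall>h. 0 < h \<and> h < d \<longrightarrow>
        norm (integral (cbox x (x + h *\<^sub>R One)) g /\<^sub>R h ^ DIM(real) - g x) < e"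
    using integrable_ccontinuous_explicit[of g] assms by (metis cbox_interval)
  have "(\<lambda>n. running_average g (r n) x) \<longlonglongrightarrow> g x"
    if x: "x \<notin> N" and r: "r \<longlonglongrightarrow> 0" "\<And>n. 0 < r n" for x r
    unfolding tendsto_iff
  proof (intro allI impI)
    fix e :: real assume "e > 0"
    then obtain d where "d > 0" and d: "\<forall>h. 0 < h \<and> h < d \<longrightarrow>
        norm (integral (cbox x (x + h *\<^sub>R One)) g /\<^sub>R h ^ DIM(real) - g x) < e"
      using N(2)[OF x] by blast
    have "\<forall>\<^sub>F n in sequentially. r n < d" using order_tendstoD(2)[OF r(1) \<open>d > 0\<close>] .
    then show "\<forall>\<^sub>F n in sequentially. dist (running_average g (r n) x) (g x) < e"
      by (rule eventually_mono)
         (use d r(2) in \<open>auto simp: dist_real_def running_average_def divide_inverse_commute\<close>)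
  qed
  with N(1) show ?thesis using that by blast
qed

lemma running_average_eq_diff:
  fixes g :: "real \<Rightarrow> real"
  assumes "\<And>a b. g integrable_on {a..b}" and "a \<le> t" and "0 \<le> r"
  shows "running_average g r t = (integral {a..t + r} g - integral {a..t} g) / r"
  using Henstock_Kurzweil_Integration.integral_combine[of a t "t + r" g] assms
  by (simp add: running_average_def)

lemma continuous_on_running_average:
  fixes g :: "real \<Rightarrow> real"
  assumes "\<And>a b. g integrable_on {a..b}" and "0 < r"
  shows "continuous_on {a..b} (running_average g r)"
proof -
  have F: "continuous_on {a..b + r} (\<lambda>t. integral {a..t} g)"
    by (rule indefinite_integral_continuous_1[OF assms(1)])
  have "continuous_on {a..b} (\<lambda>t. (integral {a..t + r} g - integral {a..t} g) / r)"
    using assms(2)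
    by (intro continuous_intros continuous_on_compose2[OF F] continuous_on_subset[OF F]) auto
  then show ?thesis
    by (rule continuous_on_eq) (use assms in \<open>auto simp: running_average_eq_diff\<close>)
qed

lemma integral_shift_difference_le:
  fixes F :: "real \<Rightarrow> real"
  assumes F: "continuous_on {0..1 + s} F" and s: "0 \<le> s" "s \<le> 1"
    and bounds: "\<And>t. t \<in> {0..1 + s} \<Longrightarrow> 0 \<le> F t \<and> F t \<le> M"
  shows "integral {0..1} (\<lambda>t. F (t + s) - F t) \<le> s * M"
proof -
  have int: "F integrable_on {a..b}" if "0 \<le> a" "b \<le> 1 + s" for a b
    by (rule integrable_continuous_real, rule continuous_on_subset[OF F]) (use that in auto)
  have "(\<lambda>t. F (t + s)) integrable_on {0..1}"
    by (rule integrable_continuous_real, rule continuous_on_compose2[OF F])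
       (use s in \<open>auto intro!: continuous_intros\<close>)
  then have "integral {0..1} (\<lambda>t. F (t + s) - F t) = integral {s..1 + s} F - integral {0..1} F"
    using integral_shift_Icc_real[of 0 1 F s] int[of 0 1] s by (simp add: integral_diff o_def add.commute)
  also have "\<dots> = integral {1..1 + s} F - integral {0..s} F"
    using Henstock_Kurzweil_Integration.integral_combine[of s 1 "1 + s" F]
      Henstock_Kurzweil_Integration.integral_combine[of 0 s 1 F] int s by simp
  also have "\<dots> \<le> integral {1..1 + s} (\<lambda>t. M) - 0"
    using int bounds s
    by (intro diff_mono Henstock_Kurzweil_Integration.integral_le integral_nonneg) auto
  finally show ?thesis using s by simp
qed

lemma integral_running_average_le:
  fixes g :: "real \<Rightarrow> real"
  assumes g: "\<And>a b. g integrable_on {a..b}" "\<And>x. 0 \<le> g x" and r: "0 < r" "r \<le> 1"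
  shows "integral {0..1} (running_average g r) \<le> integral {0..2} g"
proof -
  define F where "F t = integral {0..t} g" for t
  have "continuous_on {0..1 + r} F"
    unfolding F_def by (rule indefinite_integral_continuous_1[OF g(1)])
  moreover have "0 \<le> F t \<and> F t \<le> integral {0..2} g" if "t \<in> {0..1 + r}" for t
    unfolding F_def using that r g
    by (auto intro!: integral_nonneg integral_subset_le)
  ultimately have "integral {0..1} (\<lambda>t. F (t + r) - F t) \<le> r * integral {0..2} g"
    using r by (intro integral_shift_difference_le) auto
  moreover have "integral {0..1} (running_average g r) = integral {0..1} (\<lambda>t. F (t + r) - F t) / r"
    using g r by (auto simp: running_average_eq_diff[of g 0] F_def intro!: integral_cong
        simp flip: integral_divide)
  ultimately show ?thesis
    using r by (simp add: divide_le_eq mult.commute)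
qed

lemma integrable_on_zero_extension:
  fixes f :: "real \<Rightarrow> real"
  assumes "f integrable_on {c..d}"
  shows "(\<lambda>t. if t \<in> {c..d} then f t else 0) integrable_on {a..b}"
proof -
  have "f integrable_on {c..d} \<inter> {a..b}"
    using integrable_on_subinterval[OF assms, of "max c a" "min d b"] by (simp add: Int_atLeastAtMost)
  then show ?thesis by (rule integrable_restrict_Int[THEN iffD2])
qed

lemma continuous_ae_approximation:
  fixes f :: "real \<Rightarrow> real"
  assumes f: "f integrable_on {0..1}" and f_nonneg: "\<And>t. t \<in> {0..1} \<Longrightarrow> 0 \<le> f t"
  obtains A :: "nat \<Rightarrow> real \<Rightarrow> real" and N where
    "\<And>n a b. continuous_on {a..b} (A n)" "\<And>n t. 0 \<le> A n t"
    "\<And>n. integral {0..1} (A n) \<le> integral {0..1} f"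
    "negligible N" "\<And>x. x \<in> {0..1} - N \<Longrightarrow> (\<lambda>n. A n x) \<longlonglongrightarrow> f x"
proof -
  define g where "g t = (if t \<in> {0..1} then f t else 0)" for t
  have g_int: "g integrable_on {a..b}" for a b
    unfolding g_def[abs_def] using f by (rule integrable_on_zero_extension)
  have g_nonneg: "0 \<le> g t" for t
    using f_nonneg by (simp add: g_def)
  have g_total: "integral {0..2} g = integral {0..1} f"
    using integral_restrict_Int[of "{0..2}" "{0..1}" f] by (simp add: g_def[abs_def] Int_atLeastAtMost)
  define r where "r n = 1 / real (Suc n)" for n
  have r: "0 < r n" "r n \<le> 1" for n
    by (auto simp: r_def)
  have r_lim: "r \<longlonglongrightarrow> 0"
    unfolding r_def by (rule LIMSEQ_Suc[OF lim_const_over_n])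
  obtain N where "negligible N"
    and N_lim: "\<And>x. x \<notin> N \<Longrightarrow> (\<lambda>n. running_average g (r n) x) \<longlonglongrightarrow> g x"
    using running_average_tendsto_ae[OF g_int] r_lim r(1) by metis
  moreover have "(\<lambda>n. running_average g (r n) x) \<longlonglongrightarrow> f x" if "x \<in> {0..1} - N" for x
    using N_lim[of x] that by (simp add: g_def)
  moreover have "0 \<le> running_average g (r n) t" for n t
    using integral_nonneg[OF g_int g_nonneg] r[of n] by (simp add: running_average_def)
  ultimately show ?thesis
    using that[of "\<lambda>n. running_average g (r n)"] continuous_on_running_average[OF g_int r(1)]
      integral_running_average_le[OF g_int g_nonneg r] g_total by auto
qed

section \<open>A polynomial density dominating most of the mass\<close>

lemma integral_le_add_const:
  fixes p h :: "real \<Rightarrow> real"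
  assumes "p integrable_on {a..b}" and "h integrable_on {a..b}" and "a \<le> b"
    and "\<And>t. t \<in> {a..b} \<Longrightarrow> p t \<le> h t + e"
  shows "integral {a..b} p \<le> integral {a..b} h + e * (b - a)"
proof -
  have "integral {a..b} p \<le> integral {a..b} (\<lambda>t. h t + e)"
    using assms by (intro Henstock_Kurzweil_Integration.integral_le integrable_add) auto
  also have "\<dots> = integral {a..b} h + e * (b - a)"
    using integral_add[OF assms(2) integrable_const_ivl, of e] assms(3) by simp
  finally show ?thesis .
qed

lemma smoothed_density_polynomials:
  fixes f :: "real \<Rightarrow> real" and \<epsilon> :: real
  assumes f: "f integrable_on {0..1}" and f_nonneg: "\<And>t. t \<in> {0..1} \<Longrightarrow> 0 \<le> f t" and \<epsilon>: "0 < \<epsilon>"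
  obtains p :: "nat \<Rightarrow> real \<Rightarrow> real" and N where
    "\<And>n. polynomial_function (p n)"
    "\<And>n x. x \<in> {-1..2} \<Longrightarrow> \<epsilon> / 2 < p n x"
    "\<And>n. integral {0..1} (p n) \<le> integral {0..1} f + \<epsilon> + 1 / real (Suc n)"
    "negligible N"
    "\<And>x. x \<in> {0..1} - N \<Longrightarrow> (\<lambda>n. p n x) \<longlonglongrightarrow> f x + \<epsilon>"
proof -
  obtain A N where A_cont: "\<And>n a b. continuous_on {a..b} (A n)" and A_nonneg: "\<And>n t. 0 \<le> A n t"
    and A_int: "\<And>n. integral {0..1} (A n) \<le> integral {0..1} f"
    and N: "negligible N" and A_lim: "\<And>x. x \<in> {0..1} - N \<Longrightarrow> (\<lambda>n. A n x) \<longlonglongrightarrow> f x"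
    using continuous_ae_approximation[OF f f_nonneg] by blast
  define r where "r n = 1 / real (Suc n)" for n
  have r_lim: "r \<longlonglongrightarrow> 0"
    unfolding r_def by (rule LIMSEQ_Suc[OF lim_const_over_n])
  have "\<exists>q. polynomial_function q \<and> (\<forall>t\<in>{-1..2}. norm (A n t + \<epsilon> - q t) < min (\<epsilon> / 2) (r n))" for n
    using \<epsilon> by (intro Stone_Weierstrass_polynomial_function compact_Icc continuous_intros A_cont)
      (auto simp: r_def)
  then obtain p where p: "\<And>n. polynomial_function (p n)"
    and p_A: "\<And>n t. t \<in> {-1..2} \<Longrightarrow> \<bar>A n t + \<epsilon> - p n t\<bar> < min (\<epsilon> / 2) (r n)"
    by (metis real_norm_def)
  have "\<epsilon> / 2 < p n x" if "x \<in> {-1..2}" for n x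
    using p_A[OF that, of n] A_nonneg[of n x] by linarith
  moreover have "integral {0..1} (p n) \<le> integral {0..1} f + \<epsilon> + 1 / real (Suc n)" for n
  proof -
    have A_int': "A n integrable_on {0..1}"
      using A_cont by (rule integrable_continuous_real)
    have "integral {0..1} (p n) \<le> integral {0..1} (\<lambda>t. A n t + \<epsilon>) + r n * (1 - 0)"
    proof (rule integral_le_add_const)
      show "p n integrable_on {0..1}"
        using p by (intro integrable_continuous_real continuous_on_polymonial_function)
      show "p n t \<le> A n t + \<epsilon> + r n" if "t \<in> {0..1}" for t
        using p_A[of t n] that by (auto simp: abs_less_iff)
    qed (use A_int' in \<open>auto intro: integrable_add\<close>)
    then show ?thesis
      using integral_add[OF A_int' integrable_const_ivl, of \<epsilon>] A_int[of n] by (simp add: r_def)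
  qed
  moreover have "(\<lambda>n. p n x) \<longlonglongrightarrow> f x + \<epsilon>" if x: "x \<in> {0..1} - N" for x
  proof -
    have "(\<lambda>n. p n x - (A n x + \<epsilon>)) \<longlonglongrightarrow> 0"
      using p_A x by (intro Lim_null_comparison[OF _ r_lim] always_eventually)
        (auto simp: abs_minus_commute less_imp_le)
    from tendsto_add[OF this tendsto_add[OF A_lim[OF x] tendsto_const[of \<epsilon>]]] show ?thesis
      by simp
  qed
  ultimately show ?thesis
    using that p N by blast
qed

lemma dominated_convergence_ae:
  fixes f :: "nat \<Rightarrow> real \<Rightarrow> real"
  assumes f: "\<And>k. f k integrable_on S" and h: "h integrable_on S"
    and le: "\<And>k x. x \<in> S \<Longrightarrow> \<bar>f k x\<bar> \<le> h x"
    and N: "negligible N" and conv: "\<And>x. x \<in> S - N \<Longrightarrow> (\<lambda>k. f k x) \<longlonglongrightarrow> g x"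
  shows "(\<lambda>k. integral S (f k)) \<longlonglongrightarrow> integral S g"
proof -
  define f' where "f' k x = (if x \<in> N then 0 else f k x)" for k x
  define g' where "g' x = (if x \<in> N then 0 else g x)" for x
  have f': "f' k integrable_on S" and f'_eq: "integral S (f' k) = integral S (f k)" for k
    by (auto intro: integrable_spike[OF f N] integral_spike[OF N] simp: f'_def)
  have "g' integrable_on S" "(\<lambda>k. integral S (f' k)) \<longlonglongrightarrow> integral S g'"
    by (rule dominated_convergence[OF f' h]; use le conv in \<open>force simp: f'_def g'_def\<close>)+
  moreover have "integral S g' = integral S g"
    by (rule integral_spike[OF N]) (auto simp: g'_def)
  ultimately show ?thesis using f'_eq by simp
qed

lemma integrable_on_superlevel_set:
  fixes f h :: "real \<Rightarrow> real"
  assumes f: "f integrable_on {a..b}" and f_nonneg: "\<And>t. t \<in> {a..b} \<Longrightarrow> 0 \<le> f t"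
    and h: "continuous_on {a..b} h"
  shows "f integrable_on {t \<in> {a..b}. h t < f t}"
proof -
  have "(\<lambda>t. if h t < f t then f t else 0) integrable_on {a..b}"
  proof (rule measurable_bounded_by_integrable_imp_integrable[OF _ f])
    have "f \<in> borel_measurable (lebesgue_on {a..b})"
      using f by (rule integrable_imp_measurable)
    moreover have "h \<in> borel_measurable (lebesgue_on {a..b})"
      using h by (rule continuous_imp_measurable_on_sets_lebesgue) simp
    ultimately show "(\<lambda>t. if h t < f t then f t else 0) \<in> borel_measurable (lebesgue_on {a..b})"
      by measurable
  qed (use f_nonneg in auto)
  then have "(\<lambda>t. if t \<in> {t \<in> {a..b}. h t < f t} then f t else 0) integrable_on {a..b}"
    by (rule integrable_eq) auto
  moreover have "{t \<in> {a..b}. h t < f t} \<inter> {a..b} = {t \<in> {a..b}. h t < f t}"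
    by blast
  ultimately show ?thesis
    using integrable_restrict_Int[of "{t \<in> {a..b}. h t < f t}" f "{a..b}"] by metis
qed

lemma eventually_less_normalized:
  fixes a G :: "nat \<Rightarrow> real" and y I \<epsilon> :: real
  assumes a: "a \<longlonglongrightarrow> y + \<epsilon>" "\<And>n. 0 < a n" and G: "\<And>n. 0 < G n" "\<And>n. G n \<le> I + \<epsilon> + 1 / real (Suc n)"
    and "0 \<le> y" "0 \<le> I" "0 < \<epsilon>"
  shows "\<forall>\<^sub>F n in sequentially. y < (I + 2 * \<epsilon>) * (a n / G n)"
proof -
  have "y < (I + 2 * \<epsilon>) * ((y + \<epsilon>) / (I + \<epsilon>))"
    using assms(5-7) by (simp add: field_simps)
      (intro add_nonneg_pos add_pos_nonneg mult_nonneg_nonneg mult_pos_pos; simp)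
  moreover have "(\<lambda>n. (I + 2 * \<epsilon>) * (a n / (I + \<epsilon> + 1 / real (Suc n))))
      \<longlonglongrightarrow> (I + 2 * \<epsilon>) * ((y + \<epsilon>) / (I + \<epsilon> + 0))"
    using assms(6,7) by (intro tendsto_mult tendsto_divide tendsto_add tendsto_const a(1)
        LIMSEQ_Suc[OF lim_const_over_n]) auto
  ultimately have "\<forall>\<^sub>F n in sequentially. y < (I + 2 * \<epsilon>) * (a n / (I + \<epsilon> + 1 / real (Suc n)))"
    by (auto dest: order_tendstoD)
  then show ?thesis
  proof (rule eventually_mono)
    fix n
    have "0 < I + \<epsilon> + 1 / real (Suc n)"
      using assms(6,7) by (simp add: add_nonneg_pos add_pos_pos)
    then have "a n / (I + \<epsilon> + 1 / real (Suc n)) \<le> a n / G n"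
      using divide_left_mono[OF G(2) less_imp_le[OF a(2)] mult_pos_pos[OF _ G(1)]] by blast
    moreover have "0 \<le> I + 2 * \<epsilon>" using assms(6,7) by simp
    ultimately show "y < (I + 2 * \<epsilon>) * (a n / (I + \<epsilon> + 1 / real (Suc n))) \<Longrightarrow>
        y < (I + 2 * \<epsilon>) * (a n / G n)"
      by (meson less_le_trans mult_left_mono)
  qed
qed

lemma integral_superlevel_set_tendsto_zero:
  fixes f :: "real \<Rightarrow> real" and h :: "nat \<Rightarrow> real \<Rightarrow> real"
  assumes f: "f integrable_on {a..b}" and f_nonneg: "\<And>t. t \<in> {a..b} \<Longrightarrow> 0 \<le> f t"
    and h: "\<And>n. continuous_on {a..b} (h n)"
    and N: "negligible N" and ev: "\<And>x. x \<in> {a..b} - N \<Longrightarrow> \<forall>\<^sub>F n in sequentially. f x < h n x"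
  shows "(\<lambda>n. integral {t \<in> {a..b}. h n t < f t} f) \<longlonglongrightarrow> 0"
proof -
  define X where "X n = {t \<in> {a..b}. h n t < f t}" for n
  have X: "X n \<inter> {a..b} = X n" for n
    by (auto simp: X_def)
  have X_int: "f integrable_on X n" for n
    unfolding X_def using f f_nonneg h by (rule integrable_on_superlevel_set)
  have "(\<lambda>n. integral {a..b} (\<lambda>t. if t \<in> X n then f t else 0)) \<longlonglongrightarrow> integral {a..b} (\<lambda>t::real. 0)"
  proof (rule dominated_convergence_ae[OF _ f _ N])
    show "(\<lambda>t. if t \<in> X n then f t else 0) integrable_on {a..b}" for n
      using X_int[of n] by (simp add: integrable_restrict_Int X)
    show "\<bar>if t \<in> X n then f t else 0\<bar> \<le> f t" if "t \<in> {a..b}" for n t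
      using f_nonneg[OF that] by simp
    show "(\<lambda>n. if x \<in> X n then f x else 0) \<longlonglongrightarrow> 0" if "x \<in> {a..b} - N" for x
      by (rule tendsto_eventually, rule eventually_mono[OF ev[OF that]]) (auto simp: X_def)
  qed
  moreover have "integral {a..b} (\<lambda>t. if t \<in> X n then f t else 0) = integral (X n) f" for n
    using integral_restrict_Int[of "{a..b}" "X n" f] X by simp
  ultimately show ?thesis
    unfolding X_def by simp
qed

lemma polynomial_density_small_excess:
  fixes f :: "real \<Rightarrow> real" and \<epsilon> :: real
  assumes f: "f integrable_on {0..1}" and f_nonneg: "\<And>t. t \<in> {0..1} \<Longrightarrow> 0 \<le> f t" and \<epsilon>: "0 < \<epsilon>"
  defines "c \<equiv> integral {0..1} f + 2 * \<epsilon>"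
  obtains q where "polynomial_function q" and "\<And>x. x \<in> {-1..2} \<Longrightarrow> 0 < q x"
    and "integral {0..1} q = 1"
    and "f integrable_on {t \<in> {0..1}. c * q t < f t}" and "integral {t \<in> {0..1}. c * q t < f t} f \<le> \<epsilon>"
proof -
  obtain p N where p: "\<And>n. polynomial_function (p n)"
    and p_pos: "\<And>n x. x \<in> {-1..2} \<Longrightarrow> \<epsilon> / 2 < p n x"
    and p_int: "\<And>n. integral {0..1} (p n) \<le> integral {0..1} f + \<epsilon> + 1 / real (Suc n)"
    and N: "negligible N" and p_lim: "\<And>x. x \<in> {0..1} - N \<Longrightarrow> (\<lambda>n. p n x) \<longlonglongrightarrow> f x + \<epsilon>"
    using smoothed_density_polynomials[OF f f_nonneg \<epsilon>] by blast
  have p_cont: "continuous_on {0..1} (p n)" for n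
    using p by (rule continuous_on_polymonial_function)
  define G where "G n = integral {0..1} (p n)" for n
  have G_pos: "0 < G n" for n
  proof -
    have "integral {0..1} (\<lambda>t::real. \<epsilon> / 2) \<le> G n + 0 * (1 - 0)"
      unfolding G_def using p_pos[of _ n]
      by (intro integral_le_add_const integrable_continuous_real p_cont) (auto intro: less_imp_le)
    then show ?thesis using \<epsilon> by simp
  qed
  have "(\<lambda>n. integral {t \<in> {0..1}. c * (p n t / G n) < f t} f) \<longlonglongrightarrow> 0"
  proof (rule integral_superlevel_set_tendsto_zero[OF f f_nonneg _ N])
    show "continuous_on {0..1} (\<lambda>t. c * (p n t / G n))" for n
      using G_pos[of n] by (intro continuous_intros p_cont) auto
    fix x assume x: "x \<in> {0..1} - N"
    have "0 < p n x" for n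
      using p_pos[of x n] x \<epsilon> by simp
    moreover have "0 \<le> integral {0..1} f"
      using f f_nonneg by (rule integral_nonneg)
    ultimately show "\<forall>\<^sub>F n in sequentially. f x < c * (p n x / G n)"
      unfolding c_def using f_nonneg x \<epsilon> G_pos p_int
      by (intro eventually_less_normalized p_lim) (auto simp: G_def)
  qed
  then have "\<forall>\<^sub>F n in sequentially. integral {t \<in> {0..1}. c * (p n t / G n) < f t} f < \<epsilon>"
    using \<epsilon> by (rule order_tendstoD(2))
  then obtain n where n: "integral {t \<in> {0..1}. c * (p n t / G n) < f t} f < \<epsilon>"
    by (auto simp: eventually_sequentially)
  show ?thesis
  proof (rule that[of "\<lambda>t. p n t / G n"])
    show "polynomial_function (\<lambda>t. p n t / G n)"
      using p[of n] by (simp add: real_polynomial_function_eq[symmetric] real_polynomial_function_divide)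
    show "0 < p n x / G n" if "x \<in> {-1..2}" for x
      using p_pos[OF that, of n] G_pos[of n] \<epsilon> by simp
    show "integral {0..1} (\<lambda>t. p n t / G n) = 1"
      using G_pos[of n] by (simp add: G_def)
    show "f integrable_on {t \<in> {0..1}. c * (p n t / G n) < f t}"
      using f f_nonneg G_pos[of n] by (intro integrable_on_superlevel_set continuous_intros p_cont) auto
    show "integral {t \<in> {0..1}. c * (p n t / G n) < f t} f \<le> \<epsilon>"
      using n by simp
  qed
qed

section \<open>Change of variables\<close>

lemma change_of_variables_preimage:
  fixes F \<phi> \<phi>' :: "real \<Rightarrow> real"
  assumes S: "S \<in> sets lebesgue" and \<phi>: "inj_on \<phi> S"
    and \<phi>': "\<And>s. s \<in> S \<Longrightarrow> (\<phi> has_real_derivative \<phi>' s) (at s within S)"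
    and Y: "Y \<subseteq> \<phi> ` S" and F_nonneg: "\<And>t. t \<in> Y \<Longrightarrow> 0 \<le> F t" and F_int: "F integrable_on Y"
  shows "(\<lambda>s. \<bar>\<phi>' s\<bar> * F (\<phi> s)) integrable_on {s \<in> S. \<phi> s \<in> Y}"
    and "integral {s \<in> S. \<phi> s \<in> Y} (\<lambda>s. \<bar>\<phi>' s\<bar> * F (\<phi> s)) = integral Y F"
proof -
  define G where "G t = (if t \<in> Y then F t else 0)" for t
  define P where "P = {s \<in> S. \<phi> s \<in> Y}"
  have YS: "Y \<inter> \<phi> ` S = Y"
    using Y by blast
  have "G integrable_on \<phi> ` S"
    using F_int integrable_restrict_Int[of Y F "\<phi> ` S", unfolded YS] by (simp add: G_def[abs_def])
  then have "G absolutely_integrable_on \<phi> ` S"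
    using F_nonneg by (intro nonnegative_absolutely_integrable_1) (auto simp: G_def)
  then have cov: "(\<lambda>s. \<bar>\<phi>' s\<bar> * G (\<phi> s)) absolutely_integrable_on S \<and>
      integral S (\<lambda>s. \<bar>\<phi>' s\<bar> * G (\<phi> s)) = integral (\<phi> ` S) G"
    using S \<phi> \<phi>' by (subst has_absolute_integral_change_of_variables_1') auto
  have eq: "\<bar>\<phi>' s\<bar> * G (\<phi> s) = (if s \<in> P then \<bar>\<phi>' s\<bar> * F (\<phi> s) else 0)" if "s \<in> S" for s
    using that by (simp add: G_def P_def)
  have "(\<lambda>s. if s \<in> P then \<bar>\<phi>' s\<bar> * F (\<phi> s) else 0) integrable_on S"
    using cov eq by (auto simp: absolutely_integrable_on_def intro: integrable_eq)
  moreover have "integral S (\<lambda>s. if s \<in> P then \<bar>\<phi>' s\<bar> * F (\<phi> s) else 0) = integral Y F"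
  proof -
    have "integral S (\<lambda>s. if s \<in> P then \<bar>\<phi>' s\<bar> * F (\<phi> s) else 0)
        = integral S (\<lambda>s. \<bar>\<phi>' s\<bar> * G (\<phi> s))"
      using eq by (intro integral_cong) simp
    also have "\<dots> = integral (\<phi> ` S) G"
      using cov by simp
    also have "\<dots> = integral Y F"
      using integral_restrict_Int[of "\<phi> ` S" Y F, unfolded YS] unfolding G_def[abs_def] .
    finally show ?thesis .
  qed
  moreover have "P \<inter> S = P"
    by (auto simp: P_def)
  ultimately show "(\<lambda>s. \<bar>\<phi>' s\<bar> * F (\<phi> s)) integrable_on {s \<in> S. \<phi> s \<in> Y}"
    and "integral {s \<in> S. \<phi> s \<in> Y} (\<lambda>s. \<bar>\<phi>' s\<bar> * F (\<phi> s)) = integral Y F"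
    unfolding P_def[symmetric] by (simp_all add: integrable_restrict_Int integral_restrict_Int)
qed

lemma integral_superlevel_set_reparametrization:
  fixes f q \<phi> :: "real \<Rightarrow> real" and c :: real
  assumes \<phi>: "bij_betw \<phi> {0..1} {0..1}"
    and \<phi>': "\<And>s. s \<in> {0..1} \<Longrightarrow> (\<phi> has_real_derivative 1 / q (\<phi> s)) (at s within {0..1})"
    and q_pos: "\<And>t. t \<in> {0..1} \<Longrightarrow> 0 < q t" and f_nonneg: "\<And>t. t \<in> {0..1} \<Longrightarrow> 0 \<le> f t"
    and f_int: "f integrable_on {t \<in> {0..1}. c * q t < f t}"
  defines "X \<equiv> {s \<in> {0..1}. c < f (\<phi> s) * (1 / q (\<phi> s))}"
  shows "(\<lambda>s. f (\<phi> s) * (1 / q (\<phi> s))) integrable_on X"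
    and "integral X (\<lambda>s. f (\<phi> s) * (1 / q (\<phi> s))) = integral {t \<in> {0..1}. c * q t < f t} f"
proof -
  define Y where "Y = {t \<in> {0..1}. c * q t < f t}"
  have "c < f (\<phi> s) * (1 / q (\<phi> s)) \<longleftrightarrow> \<phi> s \<in> Y" if "s \<in> {0..1}" for s
  proof -
    have "\<phi> s \<in> {0..1}" using bij_betw_apply[OF \<phi> that] .
    with q_pos[of "\<phi> s"] show ?thesis by (simp add: Y_def field_simps)
  qed
  then have X: "X = {s \<in> {0..1}. \<phi> s \<in> Y}"
    unfolding X_def by blast
  have "Y \<subseteq> \<phi> ` {0..1}"
    using bij_betw_imp_surj_on[OF \<phi>] by (auto simp: Y_def)
  moreover have "f integrable_on Y" "\<And>t. t \<in> Y \<Longrightarrow> 0 \<le> f t"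
    using f_int f_nonneg by (simp_all add: Y_def)
  ultimately have cov: "(\<lambda>s. \<bar>1 / q (\<phi> s)\<bar> * f (\<phi> s)) integrable_on X"
    "integral X (\<lambda>s. \<bar>1 / q (\<phi> s)\<bar> * f (\<phi> s)) = integral Y f"
    unfolding X by (intro change_of_variables_preimage bij_betw_imp_inj_on[OF \<phi>] \<phi>'; simp)+
  have eq: "\<bar>1 / q (\<phi> s)\<bar> * f (\<phi> s) = f (\<phi> s) * (1 / q (\<phi> s))" if "s \<in> X" for s
    using that q_pos[of "\<phi> s"] bij_betw_apply[OF \<phi>, of s] by (simp add: X_def)
  show "(\<lambda>s. f (\<phi> s) * (1 / q (\<phi> s))) integrable_on X"
    using cov(1) eq by (rule integrable_eq)
  show "integral X (\<lambda>s. f (\<phi> s) * (1 / q (\<phi> s))) = integral {t \<in> {0..1}. c * q t < f t} f"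
  proof -
    have "integral X (\<lambda>s. f (\<phi> s) * (1 / q (\<phi> s))) = integral X (\<lambda>s. \<bar>1 / q (\<phi> s)\<bar> * f (\<phi> s))"
      by (rule integral_cong) (rule eq[symmetric])
    also have "\<dots> = integral Y f"
      by (rule cov(2))
    finally show ?thesis
      by (simp only: Y_def)
  qed
qed

theorem lemma25:
  fixes f :: "real \<Rightarrow> real" and \<epsilon> :: real
  assumes "f integrable_on {0..1}"
    and "\<forall>t\<in>{0..1}. f t \<ge> 0"
    and "\<epsilon> > 0"
  shows "\<exists>\<phi> \<phi>' :: real \<Rightarrow> real.
           orient_pres_diffeo01 \<phi> \<and>
           (\<forall>t\<in>{0..1}. (\<phi> has_real_derivative \<phi>' t) (at t within {0..1})) \<and>
           (let ft = (\<lambda>t. f (\<phi> t) * \<phi>' t);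
                X = {t\<in>{0..1}. ft t > integral {0..1} f + 2 * \<epsilon>}
            in ft integrable_on X \<and> integral X ft \<le> \<epsilon>)"
proof -
  note f_nonneg = assms(2)[rule_format]
  obtain q where q: "polynomial_function q" and q_pos: "\<And>x. x \<in> {-1..2} \<Longrightarrow> 0 < q x"
    and q_int: "integral {0..1} q = 1"
    and excess: "f integrable_on {t \<in> {0..1}. (integral {0..1} f + 2 * \<epsilon>) * q t < f t}"
      "integral {t \<in> {0..1}. (integral {0..1} f + 2 * \<epsilon>) * q t < f t} f \<le> \<epsilon>"
    using polynomial_density_small_excess[OF assms(1) f_nonneg assms(3)] by blast
  obtain \<phi> where \<phi>: "orient_pres_diffeo01 \<phi>"
    and \<phi>': "\<And>s. s \<in> {0..1} \<Longrightarrow> (\<phi> has_real_derivative 1 / q (\<phi> s)) (at s within {0..1})"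
    using orient_pres_diffeo01_normalizing_density[OF q q_pos q_int] by blast
  have "bij_betw \<phi> {0..1} {0..1}"
    using \<phi> by (simp add: orient_pres_diffeo01_def)
  note reparametrized = integral_superlevel_set_reparametrization[OF this \<phi>' _ f_nonneg excess(1)]
  show ?thesis
    unfolding Let_def using \<phi> \<phi>' reparametrized excess(2) q_pos
    by (intro exI[of _ \<phi>] exI[of _ "\<lambda>s. 1 / q (\<phi> s)"]) auto
qed

end
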